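(* Let $X$ be a $T_0$-space such that for every nonempty closed set $C\neq X$ and every $K\in K(X)$, the set $\max(C)$ of maximal elements of $C$ (in the specialization order) is nonempty and ${\downarrow}(C\cap K)$ is closed. Then $X$ is $S^{\ast}$-well-filtered.
   Context: All spaces are $T_0$. The specialization order of $X$ is given by $x\le y$ iff $x\in cl(\{y\})$; ${\uparrow},{\downarrow}$ are taken with respect to it; a subset is saturated if it is an upper set in the specialization order. $K(X)$ denotes the set of all nonempty compact saturated subsets of $X$; a family in $K(X)$ is filtered if any two members contain a common member. $X$ is $S^{\ast}$-well-filtered if for every filtered family $\{K_i\mid i\in I\}\subseteq K(X)$, every $G\in K(X)$ and every nonempty open $U$, $\bigcap_{i\in I}K_i\cap G\subseteq U$ implies $K_i\cap G\subseteq U$ for some $i$. *)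

theory Defs
  imports "HOL-Analysis.Analysis"
begin

definition spec_le :: "'a topology \<Rightarrow> 'a \<Rightarrow> 'a \<Rightarrow> bool" where
  "spec_le X x y \<longleftrightarrow> x \<in> topspace X \<and> y \<in> topspace X \<and> x \<in> X closure_of {y}"

definition up_set :: "'a topology \<Rightarrow> 'a set \<Rightarrow> 'a set" where
  "up_set X A = {y \<in> topspace X. \<exists>x\<in>A. spec_le X x y}"

definition down_set :: "'a topology \<Rightarrow> 'a set \<Rightarrow> 'a set" where
  "down_set X A = {y \<in> topspace X. \<exists>x\<in>A. spec_le X y x}"

definition saturated :: "'a topology \<Rightarrow> 'a set \<Rightarrow> bool" where
  "saturated X A \<longleftrightarrow> A \<subseteq> topspace X \<and> up_set X A \<subseteq> A"

definition KX :: "'a topology \<Rightarrow> 'a set set" where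
  "KX X = {K. K \<noteq> {} \<and> compactin X K \<and> saturated X K}"

definition max_set :: "'a topology \<Rightarrow> 'a set \<Rightarrow> 'a set" where
  "max_set X C = {x \<in> C. \<forall>y\<in>C. spec_le X x y \<longrightarrow> y = x}"

definition filtered_family :: "'a set set \<Rightarrow> bool" where
  "filtered_family F \<longleftrightarrow> (\<forall>K1\<in>F. \<forall>K2\<in>F. \<exists>K3\<in>F. K3 \<subseteq> K1 \<inter> K2)"

definition S_star_well_filtered :: "'a topology \<Rightarrow> bool" where
  "S_star_well_filtered X \<longleftrightarrow>
     (\<forall>F. F \<noteq> {} \<and> F \<subseteq> KX X \<and> filtered_family F \<longrightarrow>
       (\<forall>G\<in>KX X. \<forall>U. openin X U \<and> U \<noteq> {} \<and> \<Inter>F \<inter> G \<subseteq> U \<longrightarrow>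
          (\<exists>K\<in>F. K \<inter> G \<subseteq> U)))"

end

theory Submission
  imports Defs
begin

text \<open>
  Suppose no \<open>K \<inter> G\<close>, \<open>K \<in> \<F>\<close>, lies in \<open>U\<close>. Then every \<open>K \<in> \<F>\<close> meets the closed set
  \<open>\<down>((X - U) \<inter> G)\<close>, and by Zorn's lemma and compactness this set contains a closed set \<open>A\<close>
  that is minimal among the closed sets meeting every member of \<open>\<F>\<close>. For \<open>K \<in> \<F>\<close> the closed
  set \<open>\<down>(A \<inter> K)\<close> still meets every member of the filtered family \<open>\<F>\<close>, so it equals \<open>A\<close>.
  Hence a maximal point \<open>m\<close> of \<open>A\<close> lies in every \<open>K \<in> \<F>\<close>, and a point \<open>g \<in> (X - U) \<inter> G\<close>
  above \<open>m\<close> lies in \<open>\<Inter>\<F> \<inter> G \<subseteq> U\<close> by saturation, a contradiction.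
\<close>

lemma spec_le_refl: "x \<in> topspace X \<Longrightarrow> spec_le X x x"
  unfolding spec_le_def using closure_of_subset[of "{x}" X] by auto

lemma closedin_spec_le_down: "closedin X C \<Longrightarrow> spec_le X y x \<Longrightarrow> x \<in> C \<Longrightarrow> y \<in> C"
  unfolding spec_le_def by (meson closure_of_minimal empty_subsetI insert_subset subsetD)

lemma saturated_spec_le_up: "saturated X K \<Longrightarrow> spec_le X x y \<Longrightarrow> x \<in> K \<Longrightarrow> y \<in> K"
  unfolding saturated_def up_set_def spec_le_def by blast

lemma subset_down_set: "S \<subseteq> topspace X \<Longrightarrow> S \<subseteq> down_set X S"
  unfolding down_set_def by (auto intro: spec_le_refl)

lemma down_set_subset_closedin:
  assumes "closedin X C" "S \<subseteq> C"
  shows "down_set X S \<subseteq> C"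
proof
  fix y assume "y \<in> down_set X S"
  then obtain x where "x \<in> S" "spec_le X y x"
    unfolding down_set_def by blast
  with assms show "y \<in> C"
    by (meson closedin_spec_le_down subsetD)
qed

definition minimal_closed_meeting :: "'a topology \<Rightarrow> 'a set set \<Rightarrow> 'a set \<Rightarrow> bool" where
  "minimal_closed_meeting X \<F> A \<longleftrightarrow>
     closedin X A \<and> (\<forall>K\<in>\<F>. K \<inter> A \<noteq> {}) \<and>
     (\<forall>B. closedin X B \<and> B \<subseteq> A \<and> (\<forall>K\<in>\<F>. K \<inter> B \<noteq> {}) \<longrightarrow> B = A)"

lemma compactin_meets_Inter_chain:
  assumes K: "compactin X K" and C: "closedin X C" "K \<inter> C \<noteq> {}"
    and \<C>: "\<forall>B\<in>\<C>. closedin X B \<and> B \<subseteq> C \<and> K \<inter> B \<noteq> {}"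
    and chain: "subset.chain UNIV \<C>"
  shows "K \<inter> \<Inter>(insert C \<C>) \<noteq> {}"
proof -
  have "K \<inter> \<Inter>\<G> \<noteq> {}" if \<G>: "finite \<G>" "\<G> \<subseteq> insert C \<C>" for \<G>
  proof (cases "\<G> \<inter> \<C> = {}")
    case True
    with \<G> have "C \<subseteq> \<Inter>\<G>" by blast
    with C show ?thesis by blast
  next
    case False
    have "subset.chain UNIV (\<G> \<inter> \<C>)"
      using chain by (auto simp: subset_chain_def)
    with \<G> False have B: "\<Inter>(\<G> \<inter> \<C>) \<in> \<C>"
      by (metis Int_lower2 Inter_in_chain finite_Int subsetD)
    then have "\<Inter>(\<G> \<inter> \<C>) \<subseteq> C"
      using \<C> by blast
    with \<G> have "\<Inter>(\<G> \<inter> \<C>) \<subseteq> \<Inter>\<G>" by auto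
    moreover have "K \<inter> \<Inter>(\<G> \<inter> \<C>) \<noteq> {}"
      using bspec[OF \<C> B] by blast
    ultimately show ?thesis by blast
  qed
  moreover have "\<forall>B\<in>insert C \<C>. closedin X B"
    using C \<C> by blast
  ultimately show ?thesis
    using compactin_fip[THEN iffD1, OF K, THEN conjunct2, THEN spec, of "insert C \<C>"] by blast
qed

lemma minimal_closed_meeting_exists:
  assumes C: "closedin X C" and \<F>: "\<forall>K\<in>\<F>. compactin X K \<and> K \<inter> C \<noteq> {}"
  obtains A where "A \<subseteq> C" "minimal_closed_meeting X \<F> A"
proof -
  define \<A> where "\<A> = {B. closedin X B \<and> B \<subseteq> C \<and> (\<forall>K\<in>\<F>. K \<inter> B \<noteq> {})}"
  have po: "partial_order_on \<A> (relation_of (\<lambda>A B. B \<subseteq> A) \<A>)"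
    by (rule partial_order_on_relation_ofI) auto
  have "\<exists>L\<in>\<A>. \<forall>B\<in>\<C>. L \<subseteq> B" if "\<C> \<in> Chains (relation_of (\<lambda>A B. B \<subseteq> A) \<A>)" for \<C>
  proof
    from that have "\<C> \<subseteq> \<A>"
      unfolding Chains_def relation_of_def by blast
    then have \<C>: "\<forall>B\<in>\<C>. closedin X B \<and> B \<subseteq> C \<and> (\<forall>K\<in>\<F>. K \<inter> B \<noteq> {})"
      unfolding \<A>_def by blast
    from that have chain: "subset.chain UNIV \<C>"
      unfolding Chains_def relation_of_def subset_chain_def by blast
    have "closedin X (\<Inter>(insert C \<C>))"
      using C \<C> by (intro closedin_Inter) auto
    moreover have "K \<inter> \<Inter>(insert C \<C>) \<noteq> {}" if "K \<in> \<F>" for K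
      using \<F> \<C> that by (intro compactin_meets_Inter_chain[OF _ C _ _ chain]) auto
    ultimately show "\<Inter>(insert C \<C>) \<in> \<A>"
      unfolding \<A>_def by blast
  qed auto
  then obtain A where A: "A \<in> \<A>" and max: "\<forall>B\<in>\<A>. B \<subseteq> A \<longrightarrow> B = A"
    using predicate_Zorn[OF po] by blast
  show thesis
  proof
    show "A \<subseteq> C"
      using A unfolding \<A>_def by blast
    then have "\<forall>B. closedin X B \<and> B \<subseteq> A \<and> (\<forall>K\<in>\<F>. K \<inter> B \<noteq> {}) \<longrightarrow> B = A"
      using max unfolding \<A>_def by blast
    with A show "minimal_closed_meeting X \<F> A"
      unfolding \<A>_def minimal_closed_meeting_def by blast
  qed
qed

lemma down_set_Int_eq_minimal_closed_meeting:
  assumes A: "minimal_closed_meeting X \<F> A" and filt: "filtered_family \<F>" and K: "K \<in> \<F>"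
    and closed: "closedin X (down_set X (A \<inter> K))"
  shows "down_set X (A \<inter> K) = A"
proof -
  have A_closed: "closedin X A" and A_meets: "\<forall>K\<in>\<F>. K \<inter> A \<noteq> {}"
    and A_min: "\<And>B. closedin X B \<Longrightarrow> B \<subseteq> A \<Longrightarrow> \<forall>K\<in>\<F>. K \<inter> B \<noteq> {} \<Longrightarrow> B = A"
    using A unfolding minimal_closed_meeting_def by blast+
  show ?thesis
  proof (rule A_min[OF closed])
    show "down_set X (A \<inter> K) \<subseteq> A"
      by (rule down_set_subset_closedin[OF A_closed]) blast
    show "\<forall>K'\<in>\<F>. K' \<inter> down_set X (A \<inter> K) \<noteq> {}"
    proof
      fix K' assume "K' \<in> \<F>"
      then obtain K3 where "K3 \<in> \<F>" "K3 \<subseteq> K \<inter> K'"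
        using filt K unfolding filtered_family_def by blast
      with A_meets have "K' \<inter> (A \<inter> K) \<noteq> {}"
        by blast
      moreover have "A \<inter> K \<subseteq> down_set X (A \<inter> K)"
        using closedin_subset[OF A_closed] by (intro subset_down_set) blast
      ultimately show "K' \<inter> down_set X (A \<inter> K) \<noteq> {}"
        by blast
    qed
  qed
qed

lemma max_set_subset_Inter:
  assumes A: "minimal_closed_meeting X \<F> A" and filt: "filtered_family \<F>"
    and closed: "\<forall>K\<in>\<F>. closedin X (down_set X (A \<inter> K))"
  shows "max_set X A \<subseteq> \<Inter>\<F>"
proof (intro subsetI InterI)
  fix m K assume m: "m \<in> max_set X A" and K: "K \<in> \<F>"
  then have "m \<in> down_set X (A \<inter> K)"
    using down_set_Int_eq_minimal_closed_meeting[OF A filt K] closed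
    unfolding max_set_def by simp
  then obtain y where "y \<in> A \<inter> K" "spec_le X m y"
    unfolding down_set_def by blast
  with m show "m \<in> K"
    unfolding max_set_def by auto
qed

lemma saturated_Inter_meets_down_set:
  assumes "\<forall>K\<in>\<F>. saturated X K" "\<Inter>\<F> \<inter> down_set X S \<noteq> {}"
  shows "\<Inter>\<F> \<inter> S \<noteq> {}"
proof -
  obtain m s where "m \<in> \<Inter>\<F>" "s \<in> S" "spec_le X m s"
    using assms(2) unfolding down_set_def by blast
  moreover have "s \<in> K" if "K \<in> \<F>" "m \<in> K" for K
    using saturated_spec_le_up[of X K m s] assms(1) that \<open>spec_le X m s\<close> by blast
  ultimately show ?thesis
    by blast
qed

lemma Inter_meets_closed:
  assumes hyp: "\<And>C K. closedin X C \<Longrightarrow> C \<noteq> {} \<Longrightarrow> C \<noteq> topspace X \<Longrightarrow> K \<in> KX X \<Longrightarrow>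
                  max_set X C \<noteq> {} \<and> closedin X (down_set X (C \<inter> K))"
    and \<F>: "\<F> \<noteq> {}" "\<F> \<subseteq> KX X" "filtered_family \<F>"
    and D: "closedin X D" "D \<noteq> topspace X" "\<forall>K\<in>\<F>. K \<inter> D \<noteq> {}"
  shows "\<Inter>\<F> \<inter> D \<noteq> {}"
proof -
  have "\<forall>K\<in>\<F>. compactin X K \<and> K \<inter> D \<noteq> {}"
    using \<F>(2) D(3) unfolding KX_def by blast
  then obtain A where AD: "A \<subseteq> D" and A: "minimal_closed_meeting X \<F> A"
    using minimal_closed_meeting_exists[OF D(1)] by blast
  have A_closed: "closedin X A" "A \<noteq> {}" "A \<noteq> topspace X"
    using A \<F>(1) AD D(2) closedin_subset[OF D(1)] unfolding minimal_closed_meeting_def by auto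
  obtain K0 where "K0 \<in> \<F>"
    using \<F>(1) by blast
  then have "max_set X A \<noteq> {}"
    using hyp[OF A_closed] \<F>(2) by blast
  moreover have "\<forall>K\<in>\<F>. closedin X (down_set X (A \<inter> K))"
    using hyp[OF A_closed] \<F>(2) by blast
  then have "max_set X A \<subseteq> \<Inter>\<F>"
    by (rule max_set_subset_Inter[OF A \<F>(3)])
  ultimately show ?thesis
    using AD unfolding max_set_def by blast
qed

lemma Inter_meets_closed_Int:
  assumes hyp: "\<And>C K. closedin X C \<Longrightarrow> C \<noteq> {} \<Longrightarrow> C \<noteq> topspace X \<Longrightarrow> K \<in> KX X \<Longrightarrow>
                  max_set X C \<noteq> {} \<and> closedin X (down_set X (C \<inter> K))"
    and \<F>: "\<F> \<noteq> {}" "\<F> \<subseteq> KX X" "filtered_family \<F>" and G: "G \<in> KX X"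
    and C: "closedin X C" "C \<noteq> topspace X" and meets: "\<forall>K\<in>\<F>. K \<inter> (C \<inter> G) \<noteq> {}"
  shows "\<Inter>\<F> \<inter> (C \<inter> G) \<noteq> {}"
proof -
  define D where "D = down_set X (C \<inter> G)"
  have "C \<noteq> {}"
    using \<F>(1) meets by blast
  then have "closedin X D"
    using hyp[OF C(1) _ C(2) G] unfolding D_def by blast
  moreover have "C \<inter> G \<subseteq> D"
    unfolding D_def using closedin_subset[OF C(1)] by (intro subset_down_set) blast
  moreover have "D \<subseteq> C"
    unfolding D_def by (rule down_set_subset_closedin[OF C(1)]) blast
  ultimately have D: "closedin X D" "D \<noteq> topspace X" "\<forall>K\<in>\<F>. K \<inter> D \<noteq> {}"
    using C(2) closedin_subset[OF C(1)] meets by blast+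
  have "\<Inter>\<F> \<inter> down_set X (C \<inter> G) \<noteq> {}"
    using hyp \<F> D unfolding D_def by (rule Inter_meets_closed)
  moreover have "\<forall>K\<in>\<F>. saturated X K"
    using \<F>(2) unfolding KX_def by blast
  ultimately show ?thesis
    by (rule saturated_Inter_meets_down_set[rotated])
qed

theorem mainTheorem10:
  fixes X :: "'a topology"
  assumes "t0_space X"
    and "\<And>C K. closedin X C \<Longrightarrow> C \<noteq> {} \<Longrightarrow> C \<noteq> topspace X \<Longrightarrow> K \<in> KX X \<Longrightarrow>
           max_set X C \<noteq> {} \<and> closedin X (down_set X (C \<inter> K))"
  shows "S_star_well_filtered X"
  unfolding S_star_well_filtered_def
proof (intro allI impI ballI)
  fix \<F> G U
  assume "\<F> \<noteq> {} \<and> \<F> \<subseteq> KX X \<and> filtered_family \<F>" and G: "G \<in> KX X"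
    and U: "openin X U \<and> U \<noteq> {} \<and> \<Inter>\<F> \<inter> G \<subseteq> U"
  then have \<F>: "\<F> \<noteq> {}" "\<F> \<subseteq> KX X" "filtered_family \<F>"
    by auto
  define C where "C = topspace X - U"
  have C: "closedin X C" "C \<noteq> topspace X"
    using U openin_subset[of X U] unfolding C_def by auto
  show "\<exists>K\<in>\<F>. K \<inter> G \<subseteq> U"
  proof (rule ccontr)
    assume "\<not> (\<exists>K\<in>\<F>. K \<inter> G \<subseteq> U)"
    moreover have "K \<subseteq> topspace X" if "K \<in> \<F>" for K
      using that \<F>(2) unfolding KX_def saturated_def by blast
    ultimately have "\<forall>K\<in>\<F>. K \<inter> (C \<inter> G) \<noteq> {}"
      unfolding C_def by blast
    with assms(2) \<F> G C have "\<Inter>\<F> \<inter> (C \<inter> G) \<noteq> {}"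
      by (rule Inter_meets_closed_Int)
    with U show False
      unfolding C_def by blast
  qed
qed

end
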